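(* Assume $A\ge \varepsilon^2/16$. Let $\phi^{-1},\phi^0\in\mathcal{G}_N$ with $\overline{\phi^{-1}}=\overline{\phi^0}$, and let $(\phi^k)_{k\ge -1}$ be generated by the scheme \[ \frac{\frac32\phi^{k+1}-2\phi^k+\frac12\phi^{k-1}}{\Delta t}=\Delta_N\mu_i^{k+1},\quad k\ge0, \] with either $i=1$ or $i=2$, where \[ \mu_1^{k+1}=-\nabla_N\cdot(|\nabla_N\phi^{k+1}|^2\nabla_N\phi^{k+1})+a\phi^{k+1}+2\Delta_N(2\phi^k-\phi^{k-1})-A\Delta t\,\Delta_N(\phi^{k+1}-\phi^k)+\Delta_N^2\phi^{k+1}, \] \[ \mu_2^{k+1}=-\nabla_N\cdot(|\nabla_N\phi^{k+1}|^2\nabla_N\phi^{k+1})-\varepsilon(2\phi^k-\phi^{k-1})-A\Delta t\,\Delta_N(\phi^{k+1}-\phi^k)+(1+\Delta_N)^2\phi^{k+1}. \] Define the modified energies \[ \mathcal{E}_{N,1}(\phi^{k+1},\phi^k)=E_N(\phi^{k+1})+\frac{1}{4\Delta t}\|\phi^{k+1}-\phi^k\|_{-1,N}^2+\|\nabla_N(\phi^{k+1}-\phi^k)\|_2^2, \] \[ \mathcal{E}_{N,2}(\phi^{k+1},\phi^k)=E_N(\phi^{k+1})+\frac{1}{4\Delta t}\|\phi^{k+1}-\phi^k\|_{-1,N}^2+\frac{\varepsilon}{2}\|\phi^{k+1}-\phi^k\|_2^2 . \] Then for $k\ge1$, the solution of scheme $i$ satisfies $\mathcal{E}_{N,i}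(\phi^{k+1},\phi^k)\le\mathcal{E}_{N,i}(\phi^k,\phi^{k-1})$.
   Context: Let $K\in\mathbb{N}$, $N=2K+1$, $h=1/N$, $\Omega=(0,1)^3$, grid points $(ih,jh,kh)$. $\mathcal{G}_N$ is the space of real grid functions on $\mathbb{Z}^3$ that are $N$-periodic in each index; $\langle f,g\rangle=h^3\sum_{i,j,k=0}^{N-1}f_{i,j,k}g_{i,j,k}$, $\|f\|_p=(h^3\sum|f_{i,j,k}|^p)^{1/p}$ (pointwise Euclidean norm for vector-valued grid functions), $\overline f=\langle f,1\rangle$, and $\mathring{\mathcal{G}}_N=\{f:\overline f=0\}$. Each $f\in\mathcal{G}_N$ has discrete Fourier expansion $f_{i,j,k}=\sum_{\ell,m,n=-K}^K\hat f_{\ell,m,n}\exp(2\pi\mathrm{i}(\ell x_i+my_j+nz_k))$; $\mathcal{D}_x$ multiplies coefficients by $2\pi\mathrm{i}\ell$ (similarly $\mathcal{D}_y,\mathcal{D}_z$), $\nabla_Nf=(\mathcal{D}_xf,\mathcal{D}_yf,\mathcal{D}_zf)$, $\nabla_N\cdot(f_1,f_2,f_3)=\mathcal{D}_xf_1+\mathcal{D}_yf_2+\mathcal{D}_zf_3$, $\Delta_N$ multiplies coefficients by $-4\pi^2(\ell^2+m^2+n^2)$; nonlinear products are pointwise. For $f\in\mathring{\mathcal{G}}_N$, $(-\Delta_N)^{-1}f$ is the zero-mean grid function with coefficients $\hat f_{\ell,m,n}/(4\pi^2(\ell^2+m^2+n^2))$ for $(\ell,m,n)\ne0$, and $\|f\|_{-1,N}=\langle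 f,(-\Delta_N)^{-1}f\rangle^{1/2}$. The discrete energy is $E_N(\phi)=\frac14\|\nabla_N\phi\|_4^4+\frac a2\|\phi\|_2^2-\|\nabla_N\phi\|_2^2+\frac12\|\Delta_N\phi\|_2^2$. Parameters: $\Delta t>0$, $0<\varepsilon<1$, $a=1-\varepsilon>0$, $A$ a constant. *)

theory Defs
  imports Complex_Main
begin

type_synonym grid = "int \<times> int \<times> int \<Rightarrow> real"

definition gN :: "nat \<Rightarrow> int" where "gN K = 2 * int K + 1"

definition hN :: "nat \<Rightarrow> real" where "hN K = 1 / real_of_int (gN K)"

definition periodic_grid :: "nat \<Rightarrow> grid \<Rightarrow> bool" where
  "periodic_grid K f \<longleftrightarrow> (\<forall>i j k.
      f (i + gN K, j, k) = f (i, j, k) \<and> f (i, j + gN K, k) = f (i, j, k) \<and>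
      f (i, j, k + gN K) = f (i, j, k))"

definition cell :: "nat \<Rightarrow> (int \<times> int \<times> int) set" where
  "cell K = {0..<gN K} \<times> {0..<gN K} \<times> {0..<gN K}"

definition freqs :: "nat \<Rightarrow> (int \<times> int \<times> int) set" where
  "freqs K = {-int K..int K} \<times> {-int K..int K} \<times> {-int K..int K}"

text \<open>Discrete Fourier coefficients: f_{ijk} = sum hat f_{lmn} exp(2 pi i (l x_i + m y_j + n z_k)).\<close>
definition dft_coeff :: "nat \<Rightarrow> grid \<Rightarrow> int \<times> int \<times> int \<Rightarrow> complex" where
  "dft_coeff K f = (\<lambda>(l, m, n). (\<Sum>(i, j, k)\<in>cell K.
      complex_of_real (f (i, j, k)) *
      exp (- 2 * complex_of_real pi * \<i> *
           complex_of_real (real_of_int (l * i + m * j + n * k) * hN K)))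
      / complex_of_real (real_of_int (gN K) ^ 3))"

definition spec_op :: "nat \<Rightarrow> (int \<times> int \<times> int \<Rightarrow> complex) \<Rightarrow> grid \<Rightarrow> grid" where
  "spec_op K \<sigma> f = (\<lambda>(i, j, k). Re (\<Sum>(l, m, n)\<in>freqs K.
      \<sigma> (l, m, n) * dft_coeff K f (l, m, n) *
      exp (2 * complex_of_real pi * \<i> *
           complex_of_real (real_of_int (l * i + m * j + n * k) * hN K))))"

definition Dx :: "nat \<Rightarrow> grid \<Rightarrow> grid" where
  "Dx K = spec_op K (\<lambda>(l, m, n). 2 * complex_of_real pi * \<i> * of_int l)"
definition Dy :: "nat \<Rightarrow> grid \<Rightarrow> grid" where
  "Dy K = spec_op K (\<lambda>(l, m, n). 2 * complex_of_real pi * \<i> * of_int m)"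
definition Dz :: "nat \<Rightarrow> grid \<Rightarrow> grid" where
  "Dz K = spec_op K (\<lambda>(l, m, n). 2 * complex_of_real pi * \<i> * of_int n)"

definition lapN :: "nat \<Rightarrow> grid \<Rightarrow> grid" where
  "lapN K = spec_op K (\<lambda>(l, m, n).
      complex_of_real (- 4 * pi ^ 2 * real_of_int (l ^ 2 + m ^ 2 + n ^ 2)))"

text \<open>(-Delta_N)^{-1} on zero-mean grid functions (zero mode set to 0).\<close>
definition invlapN :: "nat \<Rightarrow> grid \<Rightarrow> grid" where
  "invlapN K = spec_op K (\<lambda>(l, m, n).
      if (l, m, n) = (0, 0, 0) then 0
      else complex_of_real (1 / (4 * pi ^ 2 * real_of_int (l ^ 2 + m ^ 2 + n ^ 2))))"

definition gradN :: "nat \<Rightarrow> grid \<Rightarrow> grid \<times> grid \<times> grid" where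
  "gradN K f = (Dx K f, Dy K f, Dz K f)"

definition divN :: "nat \<Rightarrow> grid \<times> grid \<times> grid \<Rightarrow> grid" where
  "divN K F = (case F of (f1, f2, f3) \<Rightarrow> (\<lambda>p. Dx K f1 p + Dy K f2 p + Dz K f3 p))"

definition ipN :: "nat \<Rightarrow> grid \<Rightarrow> grid \<Rightarrow> real" where
  "ipN K f g = hN K ^ 3 * (\<Sum>p\<in>cell K. f p * g p)"

definition meanN :: "nat \<Rightarrow> grid \<Rightarrow> real" where
  "meanN K f = ipN K f (\<lambda>_. 1)"

definition normpN :: "nat \<Rightarrow> real \<Rightarrow> grid \<Rightarrow> real" where
  "normpN K p f = (hN K ^ 3 * (\<Sum>q\<in>cell K. \<bar>f q\<bar> powr p)) powr (1 / p)"

definition vnormpN :: "nat \<Rightarrow> real \<Rightarrow> grid \<times> grid \<times> grid \<Rightarrow> real" where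
  "vnormpN K p F = (case F of (f1, f2, f3) \<Rightarrow>
     (hN K ^ 3 * (\<Sum>q\<in>cell K. sqrt (f1 q ^ 2 + f2 q ^ 2 + f3 q ^ 2) powr p)) powr (1 / p))"

definition hm1normN :: "nat \<Rightarrow> grid \<Rightarrow> real" where
  "hm1normN K f = sqrt (ipN K f (invlapN K f))"

definition energyN :: "nat \<Rightarrow> real \<Rightarrow> grid \<Rightarrow> real" where
  "energyN K a \<phi> = 1/4 * vnormpN K 4 (gradN K \<phi>) ^ 4 + a / 2 * normpN K 2 \<phi> ^ 2
      - vnormpN K 2 (gradN K \<phi>) ^ 2 + 1/2 * normpN K 2 (lapN K \<phi>) ^ 2"

definition nonlin :: "nat \<Rightarrow> grid \<Rightarrow> grid \<times> grid \<times> grid" where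
  "nonlin K \<phi> = (let u = Dx K \<phi>; v = Dy K \<phi>; w = Dz K \<phi>;
      s = (\<lambda>p. u p ^ 2 + v p ^ 2 + w p ^ 2) in
      (\<lambda>p. s p * u p, \<lambda>p. s p * v p, \<lambda>p. s p * w p))"

text \<open>Chemical potentials of the two schemes; arguments: new, current, previous.\<close>
definition mu1 :: "nat \<Rightarrow> real \<Rightarrow> real \<Rightarrow> real \<Rightarrow> grid \<Rightarrow> grid \<Rightarrow> grid \<Rightarrow> grid" where
  "mu1 K a A dt pn pc pp = (\<lambda>q.
      - divN K (nonlin K pn) q + a * pn q
      + 2 * lapN K (\<lambda>r. 2 * pc r - pp r) q
      - A * dt * lapN K (\<lambda>r. pn r - pc r) q
      + lapN K (lapN K pn) q)"

definition mu2 :: "nat \<Rightarrow> real \<Rightarrow> real \<Rightarrow> real \<Rightarrow> grid \<Rightarrow> grid \<Rightarrow> grid \<Rightarrow> grid" where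
  "mu2 K \<epsilon> A dt pn pc pp = (\<lambda>q.
      - divN K (nonlin K pn) q - \<epsilon> * (2 * pc q - pp q)
      - A * dt * lapN K (\<lambda>r. pn r - pc r) q
      + (pn q + 2 * lapN K pn q + lapN K (lapN K pn) q))"

definition mod_energy1 :: "nat \<Rightarrow> real \<Rightarrow> real \<Rightarrow> grid \<Rightarrow> grid \<Rightarrow> real" where
  "mod_energy1 K a dt pn pc = energyN K a pn
     + 1 / (4 * dt) * hm1normN K (\<lambda>r. pn r - pc r) ^ 2
     + vnormpN K 2 (gradN K (\<lambda>r. pn r - pc r)) ^ 2"

definition mod_energy2 :: "nat \<Rightarrow> real \<Rightarrow> real \<Rightarrow> real \<Rightarrow> grid \<Rightarrow> grid \<Rightarrow> real" where
  "mod_energy2 K a \<epsilon> dt pn pc = energyN K a pn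
     + 1 / (4 * dt) * hm1normN K (\<lambda>r. pn r - pc r) ^ 2
     + \<epsilon> / 2 * normpN K 2 (\<lambda>r. pn r - pc r) ^ 2"

end

theory Submission
  imports Defs "HOL-Analysis.Complex_Transcendental"
begin

text \<open>
  The discrete Fourier transform diagonalises all linear grid operators, and by Parseval's identity
  every quadratic part of the modified energies is a weighted sum of the squared moduli of the
  Fourier coefficients. The quartic term is convex with variational derivative
  \<open>-div (|grad \<phi>|\<^sup>2 grad \<phi>)\<close>, so its increment is bounded by the pairing of this
  part of the chemical potential with \<open>\<phi>\<^sup>k\<^sup>+\<^sup>1 - \<phi>\<^sup>k\<close>.
  Both schemes treat a convex linear part with Fourier symbol \<open>c\<close> implicitly and a concave one
  with symbol \<open>s\<close> by the extrapolation \<open>2\<phi>\<^sup>k - \<phi>\<^sup>k\<^sup>-\<^sup>1\<close>: \<open>c = a + \<lambda>\<^sup>2, s = 2\<lambda>\<close>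
  for the first and \<open>c = (1 - \<lambda>)\<^sup>2, s = \<epsilon>\<close> for the second, where \<open>\<lambda> = 4\<pi>\<^sup>2|\<xi>|\<^sup>2\<close>.
  Testing the BDF2 step of a nonzero mode with \<open>(-\<Delta>)\<^sup>-\<^sup>1(\<phi>\<^sup>k\<^sup>+\<^sup>1 - \<phi>\<^sup>k)\<close> gives an exact
  identity whose right-hand side is nonpositive as soon as \<open>s \<ge> 0\<close> and
  \<open>(c - s)/2 + A\<tau> + 1/\<tau> \<ge> 0\<close> with \<open>\<tau> = \<Delta>t \<lambda>\<close>; for the second scheme this is exactly
  where \<open>A \<ge> \<epsilon>\<^sup>2/16\<close> enters. The zero mode is the mean, which the scheme conserves.
\<close>

section \<open>Characters of the discrete torus\<close>

definition wave :: "nat \<Rightarrow> int \<Rightarrow> complex" where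
  "wave K d = exp (2 * complex_of_real pi * \<i> * complex_of_real (real_of_int d * hN K))"

lemma gN_pos: "0 < gN K"
  by (simp add: gN_def)

lemma hN_pos: "0 < hN K"
  by (simp add: hN_def gN_pos)

lemma wave_add: "wave K (d + e) = wave K d * wave K e"
  unfolding wave_def by (simp add: distrib_left distrib_right exp_add[symmetric])

lemma wave_0 [simp]: "wave K 0 = 1"
  by (simp add: wave_def)

lemma cnj_wave: "cnj (wave K d) = wave K (- d)"
  unfolding wave_def exp_cnj by simp

lemma wave_power: "wave K d ^ n = wave K (d * int n)"
  by (induction n) (simp_all add: wave_add distrib_left mult.commute)

lemma wave_eq_1_iff: "wave K d = 1 \<longleftrightarrow> gN K dvd d"
proof -
  have N: "real_of_int (gN K) > 0" using gN_pos by simp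
  have "wave K d = 1 \<longleftrightarrow> (\<exists>n::int. 2 * pi * (real_of_int d / gN K) = of_int (2 * n) * pi)"
    unfolding wave_def exp_eq_1 by (simp add: hN_def)
  also have "\<dots> \<longleftrightarrow> (\<exists>n::int. real_of_int d = of_int n * of_int (gN K))"
    using N pi_gt_zero by (auto simp: field_simps)
  also have "\<dots> \<longleftrightarrow> gN K dvd d"
    unfolding dvd_def by (metis of_int_eq_iff of_int_mult mult.commute)
  finally show ?thesis .
qed

lemma sum_wave_period:
  "(\<Sum>i\<in>{a..<a + gN K}. wave K (d * i)) = (if gN K dvd d then of_int (gN K) else 0)"
proof -
  have "(\<Sum>i\<in>{a..<a + gN K}. wave K (d * i)) = (\<Sum>t<nat (gN K). wave K (d * (a + int t)))"
    by (rule sum.reindex_bij_witness[of _ "\<lambda>t. a + int t" "\<lambda>i. nat (i - a)"]) auto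
  also have "\<dots> = wave K (d * a) * (\<Sum>t<nat (gN K). wave K d ^ t)"
    by (simp add: sum_distrib_left wave_power distrib_left wave_add)
  also have "\<dots> = (if gN K dvd d then of_int (gN K) else 0)"
  proof (cases "gN K dvd d")
    case True
    then have "wave K (d * a) = 1" "wave K d = 1"
      by (simp_all add: wave_eq_1_iff)
    then show ?thesis using True gN_pos[of K] by simp
  next
    case False
    then have "wave K d \<noteq> 1" by (simp add: wave_eq_1_iff)
    moreover have "wave K d ^ nat (gN K) = 1"
      using gN_pos[of K] by (simp add: wave_power wave_eq_1_iff)
    ultimately show ?thesis using False by (simp add: geometric_sum)
  qed
  finally show ?thesis .
qed

definition dot3 :: "int \<times> int \<times> int \<Rightarrow> int \<times> int \<times> int \<Rightarrow> int" where
  "dot3 \<xi> p = fst \<xi> * fst p + fst (snd \<xi>) * fst (snd p) + snd (snd \<xi>) * snd (snd p)"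

lemma dot3_simp [simp]: "dot3 (l, m, n) (i, j, k) = l * i + m * j + n * k"
  by (simp add: dot3_def)

lemma sum_wave_cube:
  "(\<Sum>p\<in>{a1..<a1 + gN K} \<times> {a2..<a2 + gN K} \<times> {a3..<a3 + gN K}. wave K (dot3 (l, m, n) p))
   = (if gN K dvd l \<and> gN K dvd m \<and> gN K dvd n then of_int (gN K) ^ 3 else 0)"
proof -
  have "(\<Sum>p\<in>{a1..<a1 + gN K} \<times> {a2..<a2 + gN K} \<times> {a3..<a3 + gN K}. wave K (dot3 (l, m, n) p))
      = (\<Sum>i\<in>{a1..<a1 + gN K}. wave K (l * i) *
          (\<Sum>j\<in>{a2..<a2 + gN K}. wave K (m * j) * (\<Sum>k\<in>{a3..<a3 + gN K}. wave K (n * k))))"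
    by (simp add: sum.cartesian_product' wave_add sum_distrib_left mult.assoc)
  also have "\<dots> = (\<Sum>i\<in>{a1..<a1 + gN K}. wave K (l * i)) * (\<Sum>j\<in>{a2..<a2 + gN K}. wave K (m * j))
        * (\<Sum>k\<in>{a3..<a3 + gN K}. wave K (n * k))"
    by (simp add: sum_distrib_right mult.assoc)
  finally show ?thesis
    by (simp add: sum_wave_period power3_eq_cube)
qed

lemma gN_dvd_iff_zero: "\<bar>d\<bar> < gN K \<Longrightarrow> gN K dvd d \<longleftrightarrow> d = 0"
  using dvd_imp_le_int[of d "gN K"] gN_pos[of K] by auto

lemma cell_eq_cube: "cell K = {0..<0 + gN K} \<times> {0..<0 + gN K} \<times> {0..<0 + gN K}"
  by (simp add: cell_def)

lemma freqs_eq_cube: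
  "freqs K = {- int K..<- int K + gN K} \<times> {- int K..<- int K + gN K} \<times> {- int K..<- int K + gN K}"
proof -
  have "{- int K..int K} = {- int K..<- int K + gN K}" by (auto simp: gN_def)
  then show ?thesis by (simp add: freqs_def)
qed

lemma finite_cell [simp]: "finite (cell K)"
  by (simp add: cell_def)

lemma finite_freqs [simp]: "finite (freqs K)"
  by (simp add: freqs_def)

lemma sum_wave_cell:
  assumes "\<xi> \<in> freqs K" "\<eta> \<in> freqs K"
  shows "(\<Sum>p\<in>cell K. wave K (dot3 \<eta> p - dot3 \<xi> p)) = (if \<eta> = \<xi> then of_int (gN K) ^ 3 else 0)"
proof -
  obtain l m n l' m' n' where \<xi>: "\<xi> = (l, m, n)" and \<eta>: "\<eta> = (l', m', n')"
    by (cases \<xi>, cases \<eta>) auto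
  have "\<bar>l' - l\<bar> < gN K" "\<bar>m' - m\<bar> < gN K" "\<bar>n' - n\<bar> < gN K"
    using assms by (auto simp: \<xi> \<eta> freqs_def gN_def)
  moreover have "(\<Sum>p\<in>cell K. wave K (dot3 \<eta> p - dot3 \<xi> p))
      = (\<Sum>p\<in>cell K. wave K (dot3 (l' - l, m' - m, n' - n) p))"
    by (rule sum.cong) (auto simp: \<xi> \<eta> algebra_simps)
  ultimately show ?thesis
    unfolding cell_eq_cube sum_wave_cube by (simp add: gN_dvd_iff_zero \<xi> \<eta>)
qed

lemma sum_wave_freqs:
  assumes "p \<in> cell K" "q \<in> cell K"
  shows "(\<Sum>\<xi>\<in>freqs K. wave K (dot3 \<xi> q - dot3 \<xi> p)) = (if p = q then of_int (gN K) ^ 3 else 0)"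
proof -
  obtain i j k i' j' k' where p: "p = (i, j, k)" and q: "q = (i', j', k')"
    by (cases p, cases q) auto
  have "\<bar>i' - i\<bar> < gN K" "\<bar>j' - j\<bar> < gN K" "\<bar>k' - k\<bar> < gN K"
    using assms by (auto simp: p q cell_def gN_def)
  moreover have "(\<Sum>\<xi>\<in>freqs K. wave K (dot3 \<xi> q - dot3 \<xi> p))
      = (\<Sum>\<xi>\<in>freqs K. wave K (dot3 (i' - i, j' - j, k' - k) \<xi>))"
    by (rule sum.cong) (auto simp: p q algebra_simps)
  ultimately show ?thesis
    unfolding freqs_eq_cube sum_wave_cube by (auto simp: gN_dvd_iff_zero p q)
qed

section \<open>Discrete Fourier transform and Fourier symbols\<close>

lemma dft_coeff_eq:
  "dft_coeff K f \<xi> = (\<Sum>p\<in>cell K. complex_of_real (f p) * wave K (- dot3 \<xi> p)) / of_int (gN K) ^ 3"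
proof -
  obtain l m n where \<xi>: "\<xi> = (l, m, n)" by (cases \<xi>) auto
  show ?thesis
    unfolding dft_coeff_def \<xi> by (simp add: wave_def dot3_def case_prod_beta' algebra_simps)
qed

lemma spec_op_eq:
  "spec_op K \<sigma> f p = Re (\<Sum>\<eta>\<in>freqs K. \<sigma> \<eta> * dft_coeff K f \<eta> * wave K (dot3 \<eta> p))"
proof -
  obtain i j k where p: "p = (i, j, k)" by (cases p) auto
  show ?thesis
    unfolding spec_op_def p by (simp add: wave_def dot3_def case_prod_beta')
qed

lemma sum_mult_delta:
  fixes F :: "'a \<Rightarrow> 'b::comm_ring_1"
  assumes "finite A" "q \<in> A"
  shows "(\<Sum>p\<in>A. F p * (if p = q then c else 0)) = F q * c"
  using assms by (simp add: if_distrib cong: if_cong)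

lemma parseval:
  "(\<Sum>\<xi>\<in>freqs K. dft_coeff K f \<xi> * cnj (dft_coeff K g \<xi>)) = complex_of_real (ipN K f g)"
proof -
  let ?c = "of_int (gN K) ^ 3 :: complex"
  have "(\<Sum>\<xi>\<in>freqs K. dft_coeff K f \<xi> * cnj (dft_coeff K g \<xi>))
      = (\<Sum>\<xi>\<in>freqs K. \<Sum>q\<in>cell K. \<Sum>p\<in>cell K.
          complex_of_real (f p * g q) * wave K (dot3 \<xi> q - dot3 \<xi> p)) / (?c * ?c)"
    unfolding dft_coeff_eq
    by (simp add: sum_divide_distrib sum_product cnj_wave wave_add[symmetric] algebra_simps)
  also have "\<dots> = (\<Sum>q\<in>cell K. \<Sum>p\<in>cell K.
          complex_of_real (f p * g q) * (\<Sum>\<xi>\<in>freqs K. wave K (dot3 \<xi> q - dot3 \<xi> p))) / (?c * ?c)"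
    by (simp add: sum_distrib_left sum.swap[of _ "freqs K"])
  also have "\<dots> = (\<Sum>p\<in>cell K. complex_of_real (f p * g p) * ?c) / (?c * ?c)"
    by (simp add: sum_wave_freqs sum_mult_delta cong: sum.cong)
  also have "\<dots> = (\<Sum>p\<in>cell K. complex_of_real (f p * g p)) / ?c"
    unfolding sum_distrib_right[symmetric]
    by (rule nonzero_mult_divide_mult_cancel_right) (use gN_pos[of K] in simp)
  also have "\<dots> = complex_of_real (ipN K f g)"
    by (simp add: ipN_def hN_def field_simps)
  finally show ?thesis .
qed

lemma inner_complex_eq_Re_cnj: "inner z w = Re (z * cnj w)"
  by (simp add: inner_complex_def)

lemma ipN_fourier: "ipN K f g = (\<Sum>\<xi>\<in>freqs K. inner (dft_coeff K f \<xi>) (dft_coeff K g \<xi>))"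
  using arg_cong[OF parseval[of K f g], of Re] by (simp add: inner_complex_eq_Re_cnj Re_sum)

lemma ipN_self_fourier: "ipN K f f = (\<Sum>\<xi>\<in>freqs K. norm (dft_coeff K f \<xi>) ^ 2)"
  by (simp add: ipN_fourier power2_norm_eq_inner)

definition neg3 :: "int \<times> int \<times> int \<Rightarrow> int \<times> int \<times> int" where
  "neg3 \<xi> = (- fst \<xi>, - fst (snd \<xi>), - snd (snd \<xi>))"

lemma neg3_simp [simp]: "neg3 (l, m, n) = (- l, - m, - n)"
  by (simp add: neg3_def)

lemma dot3_neg3 [simp]: "dot3 (neg3 \<eta>) p = - dot3 \<eta> p"
  by (simp add: neg3_def dot3_def)

lemma neg3_freqs: "\<eta> \<in> freqs K \<Longrightarrow> neg3 \<eta> \<in> freqs K"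
  by (auto simp: neg3_def freqs_def)

definition hermitian_symbol :: "nat \<Rightarrow> (int \<times> int \<times> int \<Rightarrow> complex) \<Rightarrow> bool" where
  "hermitian_symbol K \<sigma> \<longleftrightarrow> (\<forall>\<xi>\<in>freqs K. \<sigma> (neg3 \<xi>) = cnj (\<sigma> \<xi>))"

lemma cnj_dft_coeff: "cnj (dft_coeff K f \<eta>) = dft_coeff K f (neg3 \<eta>)"
  unfolding dft_coeff_eq by (simp add: cnj_wave)

lemma spec_op_hermitian:
  assumes "hermitian_symbol K \<sigma>"
  shows "complex_of_real (spec_op K \<sigma> f p) = (\<Sum>\<eta>\<in>freqs K. \<sigma> \<eta> * dft_coeff K f \<eta> * wave K (dot3 \<eta> p))"
proof -
  let ?S = "\<Sum>\<eta>\<in>freqs K. \<sigma> \<eta> * dft_coeff K f \<eta> * wave K (dot3 \<eta> p)"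
  have "cnj ?S = (\<Sum>\<eta>\<in>freqs K. \<sigma> (neg3 \<eta>) * dft_coeff K f (neg3 \<eta>) * wave K (dot3 (neg3 \<eta>) p))"
    using assms by (simp add: hermitian_symbol_def cnj_dft_coeff cnj_wave)
  also have "\<dots> = ?S"
    by (rule sum.reindex_bij_witness[of _ neg3 neg3]) (auto simp: neg3_freqs)
  finally have "?S \<in> \<real>"
    by (simp add: Reals_cnj_iff)
  then show ?thesis
    unfolding spec_op_eq by (rule of_real_Re)
qed

lemma dft_spec_op:
  assumes "hermitian_symbol K \<sigma>" "\<xi> \<in> freqs K"
  shows "dft_coeff K (spec_op K \<sigma> f) \<xi> = \<sigma> \<xi> * dft_coeff K f \<xi>"
proof -
  let ?c = "of_int (gN K) ^ 3 :: complex"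
  have "dft_coeff K (spec_op K \<sigma> f) \<xi>
      = (\<Sum>p\<in>cell K. \<Sum>\<eta>\<in>freqs K. \<sigma> \<eta> * dft_coeff K f \<eta> * wave K (dot3 \<eta> p - dot3 \<xi> p)) / ?c"
    unfolding dft_coeff_eq[of K "spec_op K \<sigma> f"] spec_op_hermitian[OF assms(1)]
    by (simp add: sum_distrib_right wave_add[symmetric] mult.assoc)
  also have "\<dots> = (\<Sum>\<eta>\<in>freqs K. \<sigma> \<eta> * dft_coeff K f \<eta> * (\<Sum>p\<in>cell K. wave K (dot3 \<eta> p - dot3 \<xi> p))) / ?c"
    by (simp add: sum_distrib_left sum.swap[of _ "cell K"])
  also have "\<dots> = \<sigma> \<xi> * dft_coeff K f \<xi>"
    using assms(2) gN_pos[of K] by (simp add: sum_wave_cell sum_mult_delta cong: sum.cong)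
  finally show ?thesis .
qed

lemma dft_add: "dft_coeff K (\<lambda>q. f q + g q) \<xi> = dft_coeff K f \<xi> + dft_coeff K g \<xi>"
  unfolding dft_coeff_eq by (simp add: distrib_right sum.distrib add_divide_distrib)

lemma dft_diff: "dft_coeff K (\<lambda>q. f q - g q) \<xi> = dft_coeff K f \<xi> - dft_coeff K g \<xi>"
  unfolding dft_coeff_eq by (simp add: left_diff_distrib sum_subtractf diff_divide_distrib)

lemma dft_uminus: "dft_coeff K (\<lambda>q. - f q) \<xi> = - dft_coeff K f \<xi>"
  unfolding dft_coeff_eq by (simp add: sum_negf)

lemma dft_scale: "dft_coeff K (\<lambda>q. c * f q) \<xi> = c *\<^sub>R dft_coeff K f \<xi>"
  unfolding dft_coeff_eq by (simp add: scaleR_conv_of_real sum_distrib_left mult.assoc)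

lemma dft_divide: "dft_coeff K (\<lambda>q. f q / c) \<xi> = (1 / c) *\<^sub>R dft_coeff K f \<xi>"
  using dft_scale[of K "1 / c" f \<xi>] by simp

lemmas dft_linear = dft_add dft_diff dft_uminus dft_scale dft_divide

lemma ipN_spec_op_skew:
  assumes "hermitian_symbol K \<sigma>" and skew: "\<And>\<xi>. \<xi> \<in> freqs K \<Longrightarrow> cnj (\<sigma> \<xi>) = - \<sigma> \<xi>"
  shows "ipN K (spec_op K \<sigma> f) g = - ipN K f (spec_op K \<sigma> g)"
proof -
  have "Re (\<sigma> \<xi>) = 0" if "\<xi> \<in> freqs K" for \<xi>
    using skew[OF that] by (simp add: complex_eq_iff)
  then show ?thesis
    unfolding ipN_fourier sum_negf[symmetric]
    by (intro sum.cong) (simp_all add: dft_spec_op[OF assms(1)] inner_complex_eq_Re_cnj algebra_simps)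
qed

definition lap_eig :: "int \<times> int \<times> int \<Rightarrow> real" where
  "lap_eig \<xi> = 4 * pi ^ 2 * of_int (fst \<xi> ^ 2 + fst (snd \<xi>) ^ 2 + snd (snd \<xi>) ^ 2)"

lemma lap_eig_0 [simp]: "lap_eig (0, 0, 0) = 0"
  by (simp add: lap_eig_def)

lemma lap_eig_nonneg: "0 \<le> lap_eig \<xi>"
  by (simp add: lap_eig_def)

lemma lap_eig_ge_2:
  assumes "\<xi> \<noteq> (0, 0, 0)"
  shows "2 \<le> lap_eig \<xi>"
proof -
  have sq: "(1::int) \<le> x ^ 2" if "x \<noteq> 0" for x :: int
    using that zero_less_power2[of x] by linarith
  have "fst \<xi> \<noteq> 0 \<or> fst (snd \<xi>) \<noteq> 0 \<or> snd (snd \<xi>) \<noteq> 0"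
    using assms by (cases \<xi>) auto
  then have "(1::int) \<le> fst \<xi> ^ 2 + fst (snd \<xi>) ^ 2 + snd (snd \<xi>) ^ 2"
    using sq[of "fst \<xi>"] sq[of "fst (snd \<xi>)"] sq[of "snd (snd \<xi>)"]
      zero_le_power2[of "fst \<xi>"] zero_le_power2[of "fst (snd \<xi>)"] zero_le_power2[of "snd (snd \<xi>)"]
    by linarith
  then have "1 \<le> real_of_int (fst \<xi> ^ 2 + fst (snd \<xi>) ^ 2 + snd (snd \<xi>) ^ 2)"
    by linarith
  moreover have "1 \<le> pi ^ 2"
    using pi_ge_two by (simp add: one_le_power)
  ultimately have "1 \<le> pi ^ 2 * of_int (fst \<xi> ^ 2 + fst (snd \<xi>) ^ 2 + snd (snd \<xi>) ^ 2)"
    using mult_mono[of 1 "pi ^ 2" 1] by simp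
  then show ?thesis
    unfolding lap_eig_def by linarith
qed

lemma hermitian_operator_symbols:
  "hermitian_symbol K (\<lambda>(l, m, n). 2 * complex_of_real pi * \<i> * of_int l)"
  "hermitian_symbol K (\<lambda>(l, m, n). 2 * complex_of_real pi * \<i> * of_int m)"
  "hermitian_symbol K (\<lambda>(l, m, n). 2 * complex_of_real pi * \<i> * of_int n)"
  "hermitian_symbol K (\<lambda>(l, m, n). complex_of_real (- 4 * pi ^ 2 * real_of_int (l ^ 2 + m ^ 2 + n ^ 2)))"
  "hermitian_symbol K (\<lambda>(l, m, n). if (l, m, n) = (0, 0, 0) then 0
      else complex_of_real (1 / (4 * pi ^ 2 * real_of_int (l ^ 2 + m ^ 2 + n ^ 2))))"
  by (auto simp: hermitian_symbol_def)

lemma ipN_D_skew: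
  "ipN K (Dx K f) g = - ipN K f (Dx K g)"
  "ipN K (Dy K f) g = - ipN K f (Dy K g)"
  "ipN K (Dz K f) g = - ipN K f (Dz K g)"
  unfolding Dx_def Dy_def Dz_def
  by (auto intro!: ipN_spec_op_skew hermitian_operator_symbols)

lemma spec_op_diff: "spec_op K \<sigma> (\<lambda>q. f q - g q) p = spec_op K \<sigma> f p - spec_op K \<sigma> g p"
  unfolding spec_op_eq by (simp add: dft_diff algebra_simps sum_subtractf)

lemma D_diff:
  "Dx K (\<lambda>q. f q - g q) p = Dx K f p - Dx K g p"
  "Dy K (\<lambda>q. f q - g q) p = Dy K f p - Dy K g p"
  "Dz K (\<lambda>q. f q - g q) p = Dz K f p - Dz K g p"
  by (simp_all add: Dx_def Dy_def Dz_def spec_op_diff)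

lemma ipN_divN:
  "ipN K (\<lambda>q. - divN K (F1, F2, F3) q) g = ipN K F1 (Dx K g) + ipN K F2 (Dy K g) + ipN K F3 (Dz K g)"
proof -
  have "ipN K (\<lambda>q. - divN K (F1, F2, F3) q) g = - (ipN K (Dx K F1) g + ipN K (Dy K F2) g + ipN K (Dz K F3) g)"
    by (simp add: divN_def ipN_def sum_subtractf sum_negf sum.distrib left_diff_distrib
        right_diff_distrib distrib_left distrib_right)
  then show ?thesis
    by (simp add: ipN_D_skew)
qed

lemma dft_D:
  assumes "\<xi> \<in> freqs K"
  shows "dft_coeff K (Dx K f) \<xi> = (2 * pi * of_int (fst \<xi>)) *\<^sub>R (\<i> * dft_coeff K f \<xi>)"
    and "dft_coeff K (Dy K f) \<xi> = (2 * pi * of_int (fst (snd \<xi>))) *\<^sub>R (\<i> * dft_coeff K f \<xi>)"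
    and "dft_coeff K (Dz K f) \<xi> = (2 * pi * of_int (snd (snd \<xi>))) *\<^sub>R (\<i> * dft_coeff K f \<xi>)"
  using dft_spec_op[OF hermitian_operator_symbols(1) assms, of f]
    dft_spec_op[OF hermitian_operator_symbols(2) assms, of f]
    dft_spec_op[OF hermitian_operator_symbols(3) assms, of f]
  unfolding Dx_def Dy_def Dz_def by (simp_all add: case_prod_beta scaleR_conv_of_real)

lemma dft_lapN:
  assumes "\<xi> \<in> freqs K"
  shows "dft_coeff K (lapN K f) \<xi> = - lap_eig \<xi> *\<^sub>R dft_coeff K f \<xi>"
  using dft_spec_op[OF hermitian_operator_symbols(4) assms, of f]
  unfolding lapN_def by (simp add: case_prod_beta scaleR_conv_of_real lap_eig_def)

text \<open>Since \<open>1 / 0 = 0\<close>, the factor \<open>1 / lap_eig \<xi>\<close> annihilates the zero mode, as \<open>invlapN\<close> does.\<close>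

lemma dft_invlapN:
  assumes "\<xi> \<in> freqs K"
  shows "dft_coeff K (invlapN K f) \<xi> = (1 / lap_eig \<xi>) *\<^sub>R dft_coeff K f \<xi>"
  using dft_spec_op[OF hermitian_operator_symbols(5) assms, of f]
  unfolding invlapN_def by (auto simp: case_prod_beta scaleR_conv_of_real lap_eig_def)

lemma dft_coeff_zero: "dft_coeff K f (0, 0, 0) = complex_of_real (meanN K f)"
  unfolding dft_coeff_eq meanN_def ipN_def by (simp add: dot3_def hN_def field_simps)

section \<open>Norms and energies in Fourier variables\<close>

lemma normpN_2_power2: "normpN K 2 f ^ 2 = ipN K f f"
proof -
  have "0 \<le> hN K ^ 3 * (\<Sum>q\<in>cell K. f q * f q)"
    using hN_pos[of K] by (simp add: sum_nonneg)
  then show ?thesis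
    unfolding normpN_def ipN_def by (simp add: powr_half_sqrt power2_eq_square)
qed

lemma vnormpN_2_power2: "vnormpN K 2 (f1, f2, f3) ^ 2 = ipN K f1 f1 + ipN K f2 f2 + ipN K f3 f3"
proof -
  have "0 \<le> hN K ^ 3 * (\<Sum>q\<in>cell K. f1 q ^ 2 + f2 q ^ 2 + f3 q ^ 2)"
    using hN_pos[of K] by (simp add: sum_nonneg)
  then show ?thesis
    unfolding vnormpN_def ipN_def
    by (simp add: powr_half_sqrt power2_eq_square sum.distrib distrib_left)
qed

lemma vnormpN_4_power4:
  "vnormpN K 4 (f1, f2, f3) ^ 4 = hN K ^ 3 * (\<Sum>q\<in>cell K. (f1 q ^ 2 + f2 q ^ 2 + f3 q ^ 2) ^ 2)"
proof -
  have root4: "(S powr (1/4)) ^ 4 = S" if "0 \<le> S" for S :: real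
    using that by (simp add: powr_numeral[symmetric] powr_powr)
  have "sqrt x powr 4 = x ^ 2" if "0 \<le> x" for x :: real
  proof -
    have "sqrt x powr 4 = sqrt x ^ 4"
      using that by (simp add: powr_numeral)
    also have "\<dots> = (sqrt x ^ 2) ^ 2"
      by (simp flip: power_mult)
    finally show ?thesis
      using that by simp
  qed
  moreover have "0 \<le> hN K ^ 3 * (\<Sum>q\<in>cell K. (f1 q ^ 2 + f2 q ^ 2 + f3 q ^ 2) ^ 2)"
    using hN_pos[of K] by (simp add: sum_nonneg)
  ultimately show ?thesis
    unfolding vnormpN_def by (simp add: root4)
qed

lemma l2_norm_fourier: "normpN K 2 f ^ 2 = (\<Sum>\<xi>\<in>freqs K. norm (dft_coeff K f \<xi>) ^ 2)"
  by (simp add: normpN_2_power2 ipN_self_fourier)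

lemma grad_norm_fourier:
  "vnormpN K 2 (gradN K f) ^ 2 = (\<Sum>\<xi>\<in>freqs K. lap_eig \<xi> * norm (dft_coeff K f \<xi>) ^ 2)"
  unfolding gradN_def vnormpN_2_power2 ipN_self_fourier sum.distrib[symmetric]
  by (rule sum.cong) (simp_all add: dft_D norm_mult power_mult_distrib lap_eig_def algebra_simps)

lemma lap_norm_fourier:
  "normpN K 2 (lapN K f) ^ 2 = (\<Sum>\<xi>\<in>freqs K. lap_eig \<xi> ^ 2 * norm (dft_coeff K f \<xi>) ^ 2)"
  unfolding l2_norm_fourier
  by (rule sum.cong) (simp_all add: dft_lapN power_mult_distrib)

lemma hm1normN_fourier:
  "hm1normN K f ^ 2 = (\<Sum>\<xi>\<in>freqs K. 1 / lap_eig \<xi> * norm (dft_coeff K f \<xi>) ^ 2)"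
proof -
  have "ipN K f (invlapN K f) = (\<Sum>\<xi>\<in>freqs K. 1 / lap_eig \<xi> * norm (dft_coeff K f \<xi>) ^ 2)"
    unfolding ipN_fourier by (rule sum.cong) (simp_all add: dft_invlapN power2_norm_eq_inner)
  moreover have "0 \<le> (\<Sum>\<xi>\<in>freqs K. 1 / lap_eig \<xi> * norm (dft_coeff K f \<xi>) ^ 2)"
    by (simp add: sum_nonneg lap_eig_nonneg)
  ultimately show ?thesis
    unfolding hm1normN_def by simp
qed

lemma energyN_fourier:
  "energyN K a f = 1/4 * vnormpN K 4 (gradN K f) ^ 4
     + (\<Sum>\<xi>\<in>freqs K. (a / 2 - lap_eig \<xi> + lap_eig \<xi> ^ 2 / 2) * norm (dft_coeff K f \<xi>) ^ 2)"
  unfolding energyN_def lap_norm_fourier unfolding l2_norm_fourier grad_norm_fourier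
  by (simp add: algebra_simps sum.distrib sum_subtractf sum_distrib_left sum_divide_distrib)

section \<open>The quartic term\<close>

lemma quartic_convexity:
  fixes u v :: "'a::real_inner"
  shows "norm u ^ 4 / 4 - norm v ^ 4 / 4 \<le> norm u ^ 2 * inner u (u - v)"
proof -
  define a b r where "a = norm u ^ 2" and "b = norm v ^ 2" and "r = inner u v"
  have "0 \<le> norm (u - v) ^ 2" by simp
  then have "2 * r \<le> a + b"
    by (simp add: a_def b_def r_def power2_norm_eq_inner inner_diff inner_commute)
  then have "0 \<le> a * (a + b - 2 * r) / 2"
    by (simp add: a_def)
  moreover have "0 \<le> (a - b) ^ 2 / 4"
    by simp
  moreover have "a * (a - r) - (a ^ 2 / 4 - b ^ 2 / 4) = (a - b) ^ 2 / 4 + a * (a + b - 2 * r) / 2"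
    by (simp add: power2_eq_square field_simps)
  moreover have "norm u ^ 4 = a ^ 2" "norm v ^ 4 = b ^ 2"
    by (simp_all add: a_def b_def flip: power_mult)
  moreover have "norm u ^ 2 * inner u (u - v) = a * (a - r)"
    by (simp add: a_def r_def inner_diff_right power2_norm_eq_inner)
  ultimately show ?thesis
    by linarith
qed

lemma quartic_energy_decrease:
  "1/4 * vnormpN K 4 (gradN K P) ^ 4 - 1/4 * vnormpN K 4 (gradN K C) ^ 4
     \<le> ipN K (\<lambda>q. - divN K (nonlin K P) q) (\<lambda>q. P q - C q)"
proof -
  define g where "g F q = (Dx K F q, Dy K F q, Dz K F q)" for F q
  define S where "S q = Dx K P q ^ 2 + Dy K P q ^ 2 + Dz K P q ^ 2" for q
  have norm_g: "norm (g F q) ^ 2 = Dx K F q ^ 2 + Dy K F q ^ 2 + Dz K F q ^ 2" for F q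
    by (simp add: g_def norm_Pair)
  have norm4_g: "norm (g F q) ^ 4 = (Dx K F q ^ 2 + Dy K F q ^ 2 + Dz K F q ^ 2) ^ 2" for F q
    unfolding norm_g[symmetric] by (simp flip: power_mult)
  have pointwise: "norm (g P q) ^ 2 * inner (g P q) (g P q - g C q)
      = S q * Dx K P q * Dx K (\<lambda>q. P q - C q) q + S q * Dy K P q * Dy K (\<lambda>q. P q - C q) q
        + S q * Dz K P q * Dz K (\<lambda>q. P q - C q) q" for q
    unfolding norm_g S_def D_diff by (simp add: g_def) algebra
  have "1/4 * vnormpN K 4 (gradN K P) ^ 4 - 1/4 * vnormpN K 4 (gradN K C) ^ 4
      = hN K ^ 3 * (\<Sum>q\<in>cell K. norm (g P q) ^ 4 / 4 - norm (g C q) ^ 4 / 4)"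
    by (simp add: gradN_def vnormpN_4_power4 norm4_g sum_subtractf sum_divide_distrib algebra_simps)
  also have "\<dots> \<le> hN K ^ 3 * (\<Sum>q\<in>cell K. norm (g P q) ^ 2 * inner (g P q) (g P q - g C q))"
    using hN_pos[of K] by (intro mult_left_mono sum_mono quartic_convexity) simp
  also have "\<dots> = ipN K (\<lambda>q. S q * Dx K P q) (Dx K (\<lambda>q. P q - C q))
      + ipN K (\<lambda>q. S q * Dy K P q) (Dy K (\<lambda>q. P q - C q))
      + ipN K (\<lambda>q. S q * Dz K P q) (Dz K (\<lambda>q. P q - C q))"
    unfolding pointwise ipN_def by (simp only: sum.distrib distrib_left)
  also have "\<dots> = ipN K (\<lambda>q. - divN K (nonlin K P) q) (\<lambda>q. P q - C q)"
    by (simp add: nonlin_def Let_def S_def ipN_divN)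
  finally show ?thesis .
qed

section \<open>Energy decay of the convex splitting schemes\<close>

lemma bdf2_mode_identity:
  fixes x y z w :: "'a::real_inner" and lam dt A c s :: real
  assumes lam: "0 < lam" and dt: "0 < dt"
    and eq: "(1/dt) *\<^sub>R ((3/2) *\<^sub>R x - 2 *\<^sub>R y + (1/2) *\<^sub>R z)
      = - lam *\<^sub>R (w + c *\<^sub>R x - s *\<^sub>R (2 *\<^sub>R y - z) + (A * dt * lam) *\<^sub>R (x - y))"
  shows "(c - s) / 2 * (norm x ^ 2 - norm y ^ 2)
      + (1 / (4 * (dt * lam)) + s / 2) * (norm (x - y) ^ 2 - norm (y - z) ^ 2) + inner w (x - y)
    = - ((c - s) / 2 + A * (dt * lam) + 1 / (dt * lam)) * norm (x - y) ^ 2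
      - (s / 2 + 1 / (4 * (dt * lam))) * norm (x - 2 *\<^sub>R y + z) ^ 2"
proof -
  define t where "t = dt * lam"
  have t: "0 < t" using lam dt by (simp add: t_def)
  have "(1/t) *\<^sub>R ((3/2) *\<^sub>R x - 2 *\<^sub>R y + (1/2) *\<^sub>R z)
      = - (w + c *\<^sub>R x - s *\<^sub>R (2 *\<^sub>R y - z) + (A * t) *\<^sub>R (x - y))"
    using arg_cong[OF eq, of "scaleR (1/lam)"] lam by (simp add: t_def algebra_simps)
  then have w: "w = - (1/t) *\<^sub>R ((3/2) *\<^sub>R x - 2 *\<^sub>R y + (1/2) *\<^sub>R z)
      - c *\<^sub>R x + s *\<^sub>R (2 *\<^sub>R y - z) - (A * t) *\<^sub>R (x - y)"
    by (simp add: algebra_simps)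
  show ?thesis
    unfolding t_def[symmetric] w power2_norm_eq_inner
    using t by (simp add: inner_diff_left inner_diff_right inner_add_left inner_add_right
        inner_commute field_simps)
qed

lemma dft_bdf2_step:
  assumes step: "\<And>q. (3/2 * P q - 2 * C q + 1/2 * Pm q) / dt = lapN K M q" and \<xi>: "\<xi> \<in> freqs K"
  shows "(1/dt) *\<^sub>R ((3/2) *\<^sub>R dft_coeff K P \<xi> - 2 *\<^sub>R dft_coeff K C \<xi> + (1/2) *\<^sub>R dft_coeff K Pm \<xi>)
    = - lap_eig \<xi> *\<^sub>R dft_coeff K M \<xi>"
proof -
  have "(\<lambda>q. (3/2 * P q - 2 * C q + 1/2 * Pm q) / dt) = lapN K M"
    using step by (rule ext)
  then have "dft_coeff K (\<lambda>q. (3/2 * P q - 2 * C q + 1/2 * Pm q) / dt) \<xi> = dft_coeff K (lapN K M) \<xi>"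
    by simp
  then show ?thesis
    by (simp only: dft_linear dft_lapN[OF \<xi>])
qed

definition split_energy ::
  "nat \<Rightarrow> (int \<times> int \<times> int \<Rightarrow> real) \<Rightarrow> (int \<times> int \<times> int \<Rightarrow> real) \<Rightarrow> real \<Rightarrow> grid \<Rightarrow> grid \<Rightarrow> real"
  where
  "split_energy K c s dt P C = 1/4 * vnormpN K 4 (gradN K P) ^ 4
     + (\<Sum>\<xi>\<in>freqs K. (c \<xi> - s \<xi>) / 2 * norm (dft_coeff K P \<xi>) ^ 2
          + (1 / (4 * (dt * lap_eig \<xi>)) + s \<xi> / 2) * norm (dft_coeff K P \<xi> - dft_coeff K C \<xi>) ^ 2)"

lemma split_energy_decay:
  fixes K :: nat and P C Pm :: grid and c s :: "int \<times> int \<times> int \<Rightarrow> real"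
  defines "X \<equiv> dft_coeff K P" and "Y \<equiv> dft_coeff K C" and "Z \<equiv> dft_coeff K Pm"
    and "W \<equiv> dft_coeff K (\<lambda>q. - divN K (nonlin K P) q)"
  assumes dt: "0 < dt"
    and mean: "meanN K P = meanN K C" "meanN K C = meanN K Pm"
    and step: "\<And>q. (3/2 * P q - 2 * C q + 1/2 * Pm q) / dt = lapN K M q"
    and symbol: "\<And>\<xi>. \<xi> \<in> freqs K \<Longrightarrow> dft_coeff K M \<xi>
      = W \<xi> + c \<xi> *\<^sub>R X \<xi> - s \<xi> *\<^sub>R (2 *\<^sub>R Y \<xi> - Z \<xi>) + (A * dt * lap_eig \<xi>) *\<^sub>R (X \<xi> - Y \<xi>)"
    and s_nonneg: "\<And>\<xi>. \<xi> \<in> freqs K \<Longrightarrow> \<xi> \<noteq> (0, 0, 0) \<Longrightarrow> 0 \<le> s \<xi>"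
    and stable: "\<And>\<xi>. \<xi> \<in> freqs K \<Longrightarrow> \<xi> \<noteq> (0, 0, 0) \<Longrightarrow>
      0 \<le> (c \<xi> - s \<xi>) / 2 + A * (dt * lap_eig \<xi>) + 1 / (dt * lap_eig \<xi>)"
  shows "split_energy K c s dt P C \<le> split_energy K c s dt C Pm"
proof -
  have zero_mode: "X (0, 0, 0) = Y (0, 0, 0)" "Y (0, 0, 0) = Z (0, 0, 0)"
    by (simp_all add: X_def Y_def Z_def dft_coeff_zero mean)
  have modes: "(1/dt) *\<^sub>R ((3/2) *\<^sub>R X \<xi> - 2 *\<^sub>R Y \<xi> + (1/2) *\<^sub>R Z \<xi>)
      = - lap_eig \<xi> *\<^sub>R (W \<xi> + c \<xi> *\<^sub>R X \<xi> - s \<xi> *\<^sub>R (2 *\<^sub>R Y \<xi> - Z \<xi>)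
          + (A * dt * lap_eig \<xi>) *\<^sub>R (X \<xi> - Y \<xi>))" if "\<xi> \<in> freqs K" for \<xi>
    using dft_bdf2_step[OF step that] unfolding X_def Y_def Z_def symbol[OF that] .
  define mode where "mode \<xi> = (c \<xi> - s \<xi>) / 2 * (norm (X \<xi>) ^ 2 - norm (Y \<xi>) ^ 2)
      + (1 / (4 * (dt * lap_eig \<xi>)) + s \<xi> / 2) * (norm (X \<xi> - Y \<xi>) ^ 2 - norm (Y \<xi> - Z \<xi>) ^ 2)
      + inner (W \<xi>) (X \<xi> - Y \<xi>)" for \<xi>
  have "mode \<xi> \<le> 0" if \<xi>: "\<xi> \<in> freqs K" for \<xi>
  proof (cases "\<xi> = (0, 0, 0)")
    case True
    then show ?thesis using zero_mode by (simp add: mode_def)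
  next
    case False
    have lam: "0 < lap_eig \<xi>" using lap_eig_ge_2[OF False] by simp
    have "0 \<le> ((c \<xi> - s \<xi>) / 2 + A * (dt * lap_eig \<xi>) + 1 / (dt * lap_eig \<xi>)) * norm (X \<xi> - Y \<xi>) ^ 2"
      using stable[OF \<xi> False] by simp
    moreover have "0 \<le> (s \<xi> / 2 + 1 / (4 * (dt * lap_eig \<xi>))) * norm (X \<xi> - 2 *\<^sub>R Y \<xi> + Z \<xi>) ^ 2"
      using s_nonneg[OF \<xi> False] dt lam by simp
    ultimately show ?thesis
      unfolding mode_def bdf2_mode_identity[OF lam dt modes[OF \<xi>]] by linarith
  qed
  then have "(\<Sum>\<xi>\<in>freqs K. mode \<xi>) \<le> 0"
    by (simp add: sum_nonpos)
  moreover have "(\<Sum>\<xi>\<in>freqs K. mode \<xi>) = split_energy K c s dt P C - split_energy K c s dt C Pm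
      - 1/4 * vnormpN K 4 (gradN K P) ^ 4 + 1/4 * vnormpN K 4 (gradN K C) ^ 4
      + ipN K (\<lambda>q. - divN K (nonlin K P) q) (\<lambda>q. P q - C q)"
    unfolding split_energy_def ipN_fourier dft_diff X_def[symmetric] Y_def[symmetric]
      Z_def[symmetric] W_def[symmetric] mode_def
    by (simp add: sum.distrib sum_subtractf algebra_simps)
  ultimately show ?thesis
    using quartic_energy_decrease[of K P C] by linarith
qed

lemma dft_mu1:
  assumes "\<xi> \<in> freqs K"
  shows "dft_coeff K (mu1 K a A dt P C Pm) \<xi>
    = dft_coeff K (\<lambda>q. - divN K (nonlin K P) q) \<xi> + (a + lap_eig \<xi> ^ 2) *\<^sub>R dft_coeff K P \<xi>
      - (2 * lap_eig \<xi>) *\<^sub>R (2 *\<^sub>R dft_coeff K C \<xi> - dft_coeff K Pm \<xi>)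
      + (A * dt * lap_eig \<xi>) *\<^sub>R (dft_coeff K P \<xi> - dft_coeff K C \<xi>)"
  unfolding mu1_def
  by (simp only: dft_linear dft_lapN[OF assms]) (simp add: algebra_simps power2_eq_square)

lemma dft_mu2:
  assumes "\<xi> \<in> freqs K"
  shows "dft_coeff K (mu2 K \<epsilon> A dt P C Pm) \<xi>
    = dft_coeff K (\<lambda>q. - divN K (nonlin K P) q) \<xi> + (1 - lap_eig \<xi>) ^ 2 *\<^sub>R dft_coeff K P \<xi>
      - \<epsilon> *\<^sub>R (2 *\<^sub>R dft_coeff K C \<xi> - dft_coeff K Pm \<xi>)
      + (A * dt * lap_eig \<xi>) *\<^sub>R (dft_coeff K P \<xi> - dft_coeff K C \<xi>)"
  unfolding mu2_def
  by (simp only: dft_linear dft_lapN[OF assms]) (simp add: algebra_simps power2_eq_square)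

lemma mod_energy1_eq_split_energy:
  "mod_energy1 K a dt P C = split_energy K (\<lambda>\<xi>. a + lap_eig \<xi> ^ 2) (\<lambda>\<xi>. 2 * lap_eig \<xi>) dt P C"
  unfolding mod_energy1_def split_energy_def energyN_fourier hm1normN_fourier grad_norm_fourier dft_diff
  by (simp only: sum_distrib_left add.assoc flip: sum.distrib,
      rule arg_cong[where f = "(+) _"], rule sum.cong) (simp_all add: field_simps)

lemma mod_energy2_eq_split_energy:
  assumes "a = 1 - \<epsilon>"
  shows "mod_energy2 K a \<epsilon> dt P C = split_energy K (\<lambda>\<xi>. (1 - lap_eig \<xi>) ^ 2) (\<lambda>\<xi>. \<epsilon>) dt P C"
  unfolding mod_energy2_def split_energy_def energyN_fourier hm1normN_fourier l2_norm_fourier dft_diff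
  by (simp only: sum_distrib_left add.assoc flip: sum.distrib,
      rule arg_cong[where f = "(+) _"], rule sum.cong) (simp_all add: assms field_simps power2_eq_square)

lemma mu1_energy_decay:
  assumes dt: "0 < dt" and a: "0 \<le> a" and A: "0 \<le> A"
    and mean: "meanN K P = meanN K C" "meanN K C = meanN K Pm"
    and step: "\<And>q. (3/2 * P q - 2 * C q + 1/2 * Pm q) / dt = lapN K (mu1 K a A dt P C Pm) q"
  shows "mod_energy1 K a dt P C \<le> mod_energy1 K a dt C Pm"
  unfolding mod_energy1_eq_split_energy
proof (rule split_energy_decay[OF dt mean step dft_mu1])
  fix \<xi> :: "int \<times> int \<times> int" assume "\<xi> \<noteq> (0, 0, 0)"
  then have lam: "2 \<le> lap_eig \<xi>" by (rule lap_eig_ge_2)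
  then show "0 \<le> 2 * lap_eig \<xi>" by simp
  have "0 \<le> lap_eig \<xi> * (lap_eig \<xi> - 2)"
    using lam by simp
  then have "0 \<le> (a + lap_eig \<xi> ^ 2 - 2 * lap_eig \<xi>) / 2"
    using a by (simp add: power2_eq_square algebra_simps)
  then show "0 \<le> (a + lap_eig \<xi> ^ 2 - 2 * lap_eig \<xi>) / 2 + A * (dt * lap_eig \<xi>) + 1 / (dt * lap_eig \<xi>)"
    using lam A dt by simp
qed

lemma stabilizer_bound:
  fixes \<epsilon> A t q :: real
  assumes "\<epsilon> ^ 2 / 16 \<le> A" and "0 < t" and "0 \<le> q"
  shows "0 \<le> (q - \<epsilon>) / 2 + A * t + 1 / t"
proof -
  have "(q - \<epsilon>) / 2 + A * t + 1 / t = q / 2 + (A - \<epsilon> ^ 2 / 16) * t + (\<epsilon> * t / 4 - 1) ^ 2 / t"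
    using assms(2) by (simp add: power2_eq_square field_simps)
  moreover have "0 \<le> (A - \<epsilon> ^ 2 / 16) * t"
    using assms(1,2) by simp
  ultimately show ?thesis
    using assms(2,3) by simp
qed

lemma mu2_energy_decay:
  assumes dt: "0 < dt" and a: "a = 1 - \<epsilon>" and A: "\<epsilon> ^ 2 / 16 \<le> A" and \<epsilon>: "0 < \<epsilon>"
    and mean: "meanN K P = meanN K C" "meanN K C = meanN K Pm"
    and step: "\<And>q. (3/2 * P q - 2 * C q + 1/2 * Pm q) / dt = lapN K (mu2 K \<epsilon> A dt P C Pm) q"
  shows "mod_energy2 K a \<epsilon> dt P C \<le> mod_energy2 K a \<epsilon> dt C Pm"
  unfolding mod_energy2_eq_split_energy[OF a]
proof (rule split_energy_decay[OF dt mean step dft_mu2])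
  show "0 \<le> \<epsilon>" using \<epsilon> by simp
  fix \<xi> :: "int \<times> int \<times> int" assume "\<xi> \<noteq> (0, 0, 0)"
  then have "0 < dt * lap_eig \<xi>" using dt lap_eig_ge_2[of \<xi>] by simp
  with A show "0 \<le> ((1 - lap_eig \<xi>) ^ 2 - \<epsilon>) / 2 + A * (dt * lap_eig \<xi>) + 1 / (dt * lap_eig \<xi>)"
    by (rule stabilizer_bound) simp
qed

lemma meanN_bdf2_step:
  assumes "dt \<noteq> 0" and step: "\<And>q. (3/2 * P q - 2 * C q + 1/2 * Pm q) / dt = lapN K M q"
  shows "3/2 * meanN K P - 2 * meanN K C + 1/2 * meanN K Pm = 0"
proof -
  have "(0, 0, 0) \<in> freqs K"
    by (simp add: freqs_def)
  from dft_bdf2_step[OF step this] assms(1)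
  have "complex_of_real (3/2 * meanN K P - 2 * meanN K C + 1/2 * meanN K Pm) = 0"
    by (simp add: dft_coeff_zero scaleR_conv_of_real)
  then show ?thesis
    by (simp only: of_real_eq_0_iff)
qed

lemma bdf2_recurrence_const:
  fixes m :: "int \<Rightarrow> real"
  assumes rec: "\<And>j. 0 \<le> j \<Longrightarrow> 3/2 * m (j + 1) - 2 * m j + 1/2 * m (j - 1) = 0"
    and init: "m 0 = m (-1)" and "0 \<le> j"
  shows "m j = m (j - 1)"
  using \<open>0 \<le> j\<close>
proof (induction j rule: int_ge_induct)
  case base
  then show ?case using init by simp
next
  case (step i)
  then show ?case using rec[OF step(1)] by simp
qed

theorem theorem3p2:
  fixes K :: nat and \<epsilon> a A dt :: real and \<phi> :: "int \<Rightarrow> grid" and sch :: nat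
  assumes dt_pos: "dt > 0"
    and eps: "0 < \<epsilon>" "\<epsilon> < 1"
    and a_def: "a = 1 - \<epsilon>"
    and A_bound: "A \<ge> \<epsilon> ^ 2 / 16"
    and per: "\<And>k. k \<ge> -1 \<Longrightarrow> periodic_grid K (\<phi> k)"
    and mean: "meanN K (\<phi> (-1)) = meanN K (\<phi> 0)"
    and sch: "sch = 1 \<or> sch = 2"
    and scheme: "\<And>k q. k \<ge> 0 \<Longrightarrow>
       (3/2 * \<phi> (k+1) q - 2 * \<phi> k q + 1/2 * \<phi> (k-1) q) / dt =
       lapN K (if sch = 1 then mu1 K a A dt (\<phi> (k+1)) (\<phi> k) (\<phi> (k-1))
               else mu2 K \<epsilon> A dt (\<phi> (k+1)) (\<phi> k) (\<phi> (k-1))) q"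
    and k1: "k \<ge> 1"
  shows "(if sch = 1
          then mod_energy1 K a dt (\<phi> (k+1)) (\<phi> k) \<le> mod_energy1 K a dt (\<phi> k) (\<phi> (k-1))
          else mod_energy2 K a \<epsilon> dt (\<phi> (k+1)) (\<phi> k) \<le> mod_energy2 K a \<epsilon> dt (\<phi> k) (\<phi> (k-1)))"
proof -
  have mean_const: "meanN K (\<phi> j) = meanN K (\<phi> (j - 1))" if "0 \<le> j" for j
  proof (rule bdf2_recurrence_const[where m = "\<lambda>j. meanN K (\<phi> j)", OF _ _ that])
    show "3/2 * meanN K (\<phi> (i + 1)) - 2 * meanN K (\<phi> i) + 1/2 * meanN K (\<phi> (i - 1)) = 0"
      if "0 \<le> i" for i
      using dt_pos by (intro meanN_bdf2_step[OF _ scheme[OF that]]) simp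
  qed (use mean in simp)
  then have means: "meanN K (\<phi> (k + 1)) = meanN K (\<phi> k)" "meanN K (\<phi> k) = meanN K (\<phi> (k - 1))"
    using mean_const[of "k + 1"] mean_const[of k] k1 by simp_all
  have A_nonneg: "0 \<le> A"
    using A_bound zero_le_power2[of \<epsilon>] by linarith
  show ?thesis
  proof (cases "sch = 1")
    case True
    then show ?thesis
      using mu1_energy_decay[OF dt_pos _ A_nonneg means] scheme[of k] k1 a_def eps(2) by simp
  next
    case False
    then show ?thesis
      using mu2_energy_decay[OF dt_pos a_def A_bound eps(1) means] scheme[of k] k1 by simp
  qed
qed

end
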